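(* Let $k\ge2$. Then $\mathcal J_k\widehat{\mathcal L}_{k-1}=\widehat{\mathcal L}_k\mathcal J_k$ as operators $\mathbb R^{V^{k-1}}\to\mathbb R^{V^k}$.
   Context: $V$ is a finite set with symmetric non-negative weights $c_{xy}=c_{yx}\ge0$, $\alpha=(\alpha_x)$ positive. For $m\ge1$, the lookdown generator acts on $\varphi:V^m\to\mathbb R$ by $$\widehat{\mathcal L}_m\varphi(\mathbf x)=\sum_{x,y\in V}c_{xy}\sum_{i=1}^m\delta_{x,x_i}\Big(\alpha_y+2\sum_{j=1}^{i-1}\delta_{y,x_j}\Big)(\varphi(\mathbf x_i^y)-\varphi(\mathbf x)),$$ where $\mathbf x_i^y$ is $\mathbf x$ with its $i$-th coordinate replaced by $y$. $\mathcal J_k\varphi(x_1,\dots,x_k)=\varphi(x_1,\dots,x_{k-1})$. *)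

theory Defs
  imports Complex_Main
begin

text \<open>Points of V^m are lists of length m; coordinates are 0-indexed
  (coordinate i here is coordinate i+1 in the paper). Functions on V^m are
  functions on lists, of which only the values on lists of length m matter.\<close>

definition lookdown ::
  "('v::finite \<Rightarrow> 'v \<Rightarrow> real) \<Rightarrow> ('v \<Rightarrow> real) \<Rightarrow> nat \<Rightarrow> ('v list \<Rightarrow> real) \<Rightarrow> 'v list \<Rightarrow> real" where
  "lookdown c \<alpha> m \<phi> xs =
     (\<Sum>x\<in>UNIV. \<Sum>y\<in>UNIV. c x y *
        (\<Sum>i<m. (if x = xs ! i then 1 else 0) *
           (\<alpha> y + 2 * (\<Sum>j<i. if y = xs ! j then 1 else 0)) *
           (\<phi> (xs[i := y]) - \<phi> xs)))"

definition Jop :: "nat \<Rightarrow> ('v list \<Rightarrow> real) \<Rightarrow> 'v list \<Rightarrow> real" where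
  "Jop k \<phi> xs = \<phi> (take (k - 1) xs)"

end

theory Submission
  imports Defs
begin

text \<open>Moving the appended last coordinate x_k does not change J_k phi, so the
  summand of i = k vanishes; for i < k the summand only reads the coordinates
  x_1, ..., x_i, which J_k keeps.\<close>

lemma Jop_Suc_eq: "Jop (Suc m) \<phi> = (\<lambda>ys. \<phi> (take m ys))"
  by (simp add: Jop_def fun_eq_iff)

lemma lookdown_Suc_take:
  "lookdown c \<alpha> (Suc m) (\<lambda>ys. \<phi> (take m ys)) xs = lookdown c \<alpha> m \<phi> (take m xs)"
proof -
  have coordinate_sum_eq:
    "(\<Sum>i<Suc m. (if x = xs ! i then 1 else 0) *
        (\<alpha> y + 2 * (\<Sum>j<i. if y = xs ! j then 1 else 0)) *
        (\<phi> (take m (xs[i := y])) - \<phi> (take m xs)))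
     = (\<Sum>i<m. (if x = take m xs ! i then 1 else 0) *
        (\<alpha> y + 2 * (\<Sum>j<i. if y = take m xs ! j then 1 else 0)) *
        (\<phi> ((take m xs)[i := y]) - \<phi> (take m xs)))" for x y
  proof -
    have "take m (xs[m := y]) = take m xs"
      by simp
    moreover have "(\<Sum>j<i. if y = xs ! j then 1 else 0)
        = (\<Sum>j<i. if y = take m xs ! j then 1 else (0::real))" if "i < m" for i
      using that by (intro sum.cong) auto
    ultimately show ?thesis
      by (auto simp: take_update_swap intro!: sum.cong)
  qed
  show ?thesis
    unfolding lookdown_def by (simp only: coordinate_sum_eq)
qed

theorem lemmaA3:
  fixes c :: "'v::finite \<Rightarrow> 'v \<Rightarrow> real" and \<alpha> :: "'v \<Rightarrow> real" and k :: nat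
  assumes "\<And>x y. c x y = c y x"
    and "\<And>x y. c x y \<ge> 0"
    and "\<And>x. \<alpha> x > 0"
    and "k \<ge> 2"
  shows "\<forall>\<phi> xs. length xs = k \<longrightarrow>
           Jop k (lookdown c \<alpha> (k - 1) \<phi>) xs = lookdown c \<alpha> k (Jop k \<phi>) xs"
proof -
  obtain m where "k = Suc m"
    using assms(4) by (cases k) auto
  then show ?thesis
    by (simp add: Jop_def Jop_Suc_eq lookdown_Suc_take)
qed

end
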